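(* Consider the system $\dot v_1=-v_1^2-v_2$, $\dot v_2=-v_1v_2+v_1$ with initial data $(v_1(0),v_2(0))\in\mathbb{R}^2$. Its solution blows up in finite positive time if and only if $1-2v_2(0)\le v_1(0)^2$.
   Context: This is the extended system $\dot{\mathbf v}=-v_1\mathbf v+Q\mathbf v$ with $Q=\begin{pmatrix}0&-1\\1&0\end{pmatrix}$ (eigenvalues $\pm i$), governing $(v_1,v_2)=(V_x,E_x)$ along characteristics for the cold plasma case of the pressureless Euler–Poisson system $V_t+VV_x=kE-\gamma V$, $E_t+VE_x=NV$ with $k=-1$, $N=1$, $\gamma=0$. *)

theory Defs
  imports "HOL-Analysis.Analysis"
begin

definition is_solution_on :: "real \<Rightarrow> real \<Rightarrow> real \<Rightarrow> (real \<Rightarrow> real) \<Rightarrow> (real \<Rightarrow> real) \<Rightarrow> bool" where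
  "is_solution_on T a b v1 v2 \<longleftrightarrow>
     v1 0 = a \<and> v2 0 = b \<and>
     (\<forall>t\<in>{0..<T}.
        (v1 has_real_derivative (- ((v1 t) ^ 2) - v2 t)) (at t within {0..<T}) \<and>
        (v2 has_real_derivative (- v1 t * v2 t + v1 t)) (at t within {0..<T}))"

text \<open>Finite-time blow-up: the solution exists on some [0,T), T finite and positive,
  and is unbounded there (by uniqueness, T is then the maximal existence time).\<close>
definition blows_up :: "real \<Rightarrow> real \<Rightarrow> bool" where
  "blows_up a b \<longleftrightarrow>
     (\<exists>T>0. \<exists>v1 v2. is_solution_on T a b v1 v2 \<and>
        \<not> bounded ((\<lambda>t. (v1 t, v2 t)) ` {0..<T}))"

end

theory Submission
  imports Defs
begin

text \<open>The Riccati substitution \<open>v\<^sub>1 = w'/w\<close>, \<open>v\<^sub>2 = 1 + (b - 1)/w\<close> linearises the system to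
  \<open>w'' + w = 1 - b\<close> with \<open>w(0) = 1\<close>, \<open>w'(0) = a\<close>, so \<open>w(t) = 1 - b + b cos t + a sin t\<close>.
  The explicit solution exists exactly as long as \<open>w\<close> stays positive, and it is unbounded
  when \<open>w\<close> reaches zero, since \<open>w'/w\<close> is then the logarithmic derivative of a function
  tending to 0. The minimum of \<open>w\<close> is \<open>1 - b - sqrt (a\<^sup>2 + b\<^sup>2)\<close>, which is \<open>\<le> 0\<close> iff
  \<open>1 - 2b \<le> a\<^sup>2\<close>. If it is positive, the explicit solution is bounded, and an energy estimate
  shows that every solution coincides with it.\<close>

lemma first_zero_exists:
  fixes f :: "real \<Rightarrow> real"
  assumes "a \<le> s" "continuous_on {a..s} f" "0 < f a" "f s \<le> 0"
  shows "\<exists>T\<in>{a<..s}. f T = 0 \<and> (\<forall>t\<in>{a..<T}. 0 < f t)"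
proof -
  define Z where "Z = {t \<in> {a..s}. f t = 0}"
  have "\<exists>x. a \<le> x \<and> x \<le> s \<and> f x = 0"
    using assms by (intro IVT2') auto
  then have "Z \<noteq> {}" unfolding Z_def by auto
  moreover have "closed Z"
    unfolding Z_def using assms(2) by (rule continuous_closed_preimage_constant) auto
  moreover have bdd: "bdd_below Z" unfolding Z_def by (auto intro: bdd_belowI[of _ a])
  ultimately have "Inf Z \<in> Z" using closed_contains_Inf by blast
  then have T: "a \<le> Inf Z" "Inf Z \<le> s" "f (Inf Z) = 0" unfolding Z_def by auto
  have "0 < f t" if t: "t \<in> {a..<Inf Z}" for t
  proof (rule ccontr)
    assume "\<not> 0 < f t"
    then obtain x where "a \<le> x" "x \<le> t" "f x = 0"
      using t T assms(2,3) IVT2'[of f t 0 a] continuous_on_subset[of "{a..s}" f "{a..t}"] by force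
    then have "x \<in> Z" using t T unfolding Z_def by auto
    from this bdd have "Inf Z \<le> x" by (rule cInf_lower)
    with \<open>x \<le> t\<close> t show False by simp
  qed
  moreover have "Inf Z \<noteq> a" using T assms(3) by auto
  ultimately show ?thesis using T by (intro bexI[of _ "Inf Z"]) auto
qed

text \<open>If \<open>f' \<ge> m f\<close> then \<open>f(t) e\<^sup>-\<^sup>m\<^sup>t\<close> is nondecreasing, so \<open>f\<close> cannot reach zero.\<close>

lemma log_derivative_not_bdd_below:
  fixes f f' :: "real \<Rightarrow> real"
  assumes "a < T" "continuous_on {a..T} f" "0 < f a" "f T = 0"
    and pos: "\<And>x. x \<in> {a<..<T} \<Longrightarrow> 0 < f x"
    and deriv: "\<And>x. x \<in> {a<..<T} \<Longrightarrow> (f has_real_derivative f' x) (at x)"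
  shows "\<not> bdd_below ((\<lambda>x. f' x / f x) ` {a<..<T})"
proof
  assume "bdd_below ((\<lambda>x. f' x / f x) ` {a<..<T})"
  then obtain m where m: "\<forall>x\<in>{a<..<T}. m \<le> f' x / f x"
    by (auto simp: bdd_below_def)
  define g where "g x = f x * exp (- m * x)" for x
  have "g a \<le> g T"
  proof (rule DERIV_nonneg_imp_increasing_open[of a T g])
    show "continuous_on {a..T} g" unfolding g_def using assms(2) by (intro continuous_intros)
    fix x assume x: "a < x" "x < T"
    have "(g has_real_derivative f' x * exp (- m * x) + f x * (exp (- m * x) * - m)) (at x)"
      unfolding g_def[abs_def] using x by (auto intro!: derivative_eq_intros deriv)
    moreover have "f' x * exp (- m * x) + f x * (exp (- m * x) * - m)
        = (f' x / f x - m) * f x * exp (- m * x)"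
      using pos[of x] x by (simp add: field_simps)
    moreover have "0 \<le> (f' x / f x - m) * f x * exp (- m * x)"
      using m pos[of x] x by simp
    ultimately show "\<exists>y. (g has_real_derivative y) (at x) \<and> 0 \<le> y" by auto
  qed (use assms(1) in simp)
  then show False using assms(3,4) unfolding g_def by (simp add: mult_le_0_iff)
qed

lemma nonneg_zero_if_derivative_le_linear:
  fixes E E' :: "real \<Rightarrow> real"
  assumes "a \<le> t" "continuous_on {a..t} E" "E a = 0" "0 \<le> E t"
    and deriv: "\<And>x. x \<in> {a<..<t} \<Longrightarrow> (E has_real_derivative E' x) (at x) \<and> E' x \<le> K * E x"
  shows "E t = 0"
proof -
  define g where "g x = E x * exp (- K * x)" for x
  have "g t \<le> g a"
  proof (rule DERIV_nonpos_imp_decreasing_open[of a t g])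
    show "continuous_on {a..t} g" unfolding g_def using assms(2) by (intro continuous_intros)
    fix x assume x: "a < x" "x < t"
    have "(g has_real_derivative (E' x - K * E x) * exp (- K * x)) (at x)"
      unfolding g_def[abs_def] using x deriv[of x]
      by (auto intro!: derivative_eq_intros simp: algebra_simps)
    moreover have "(E' x - K * E x) * exp (- K * x) \<le> 0"
      using deriv[of x] x by (simp add: mult_nonpos_nonneg)
    ultimately show "\<exists>y. (g has_real_derivative y) (at x) \<and> y \<le> 0" by blast
  qed (use assms(1) in simp)
  then show ?thesis using assms(3,4) unfolding g_def by (simp add: mult_le_0_iff)
qed

lemma sin_cos_combination_ge:
  fixes a b t :: real
  shows "- sqrt (a\<^sup>2 + b\<^sup>2) \<le> b * cos t + a * sin t"
proof -
  have "(b * cos t + a * sin t)\<^sup>2 + (a * cos t - b * sin t)\<^sup>2 = (a\<^sup>2 + b\<^sup>2) * ((sin t)\<^sup>2 + (cos t)\<^sup>2)"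
    unfolding power2_eq_square by algebra
  then have "(- (b * cos t + a * sin t))\<^sup>2 \<le> a\<^sup>2 + b\<^sup>2"
    unfolding power2_minus sin_cos_squared_add mult_1_right
    using zero_le_power2[of "a * cos t - b * sin t"] by linarith
  then show ?thesis using real_le_rsqrt by force
qed

lemma sin_cos_combination_attains:
  fixes a b :: real
  shows "\<exists>s>0. b * cos s + a * sin s = - sqrt (a\<^sup>2 + b\<^sup>2)"
proof (cases "a\<^sup>2 + b\<^sup>2 = 0")
  case True
  then show ?thesis by (intro exI[of _ 1]) simp
next
  case False
  define R where "R = sqrt (a\<^sup>2 + b\<^sup>2)"
  have "0 < a\<^sup>2 + b\<^sup>2" using False by (simp add: less_le)
  then have R: "0 < R" "R\<^sup>2 = a\<^sup>2 + b\<^sup>2"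
    unfolding R_def by (simp_all only: real_sqrt_gt_zero real_sqrt_pow2 less_imp_le)
  have "(- b / R)\<^sup>2 + (- a / R)\<^sup>2 = 1"
    using R False by (simp add: power_divide add_divide_distrib[symmetric] add.commute)
  then obtain s where s: "0 \<le> s" "- b / R = cos s" "- a / R = sin s"
    by (rule sincos_total_2pi)
  have "b * cos (s + 2 * pi) + a * sin (s + 2 * pi) = - (b\<^sup>2 + a\<^sup>2) / R"
    unfolding cos_periodic sin_periodic s(2,3)[symmetric] by (simp add: power2_eq_square diff_divide_distrib)
  also have "\<dots> = - R" using R by (simp add: field_simps power2_eq_square)
  finally have "b * cos (s + 2 * pi) + a * sin (s + 2 * pi) = - R" .
  moreover have "0 < s + 2 * pi" using s(1) pi_gt_zero by linarith
  ultimately show ?thesis unfolding R_def by (intro exI[of _ "s + 2 * pi"] conjI)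
qed

lemma one_minus_le_sqrt_iff:
  fixes a b :: real
  shows "1 - b \<le> sqrt (a\<^sup>2 + b\<^sup>2) \<longleftrightarrow> 1 - 2 * b \<le> a\<^sup>2"
proof (cases "1 - b \<le> 0")
  case True
  then show ?thesis
    by (smt (verit) real_sqrt_ge_zero zero_le_power2 add_nonneg_nonneg)
next
  case False
  then have "1 - b \<le> sqrt (a\<^sup>2 + b\<^sup>2) \<longleftrightarrow> (1 - b)\<^sup>2 \<le> a\<^sup>2 + b\<^sup>2"
    by (metis real_le_rsqrt real_sqrt_le_iff real_sqrt_abs abs_of_nonneg not_le less_imp_le)
  also have "\<dots> \<longleftrightarrow> 1 - 2 * b \<le> a\<^sup>2" by (simp add: power2_eq_square algebra_simps)
  finally show ?thesis .
qed

lemma is_solution_on_continuous: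
  assumes "is_solution_on T a b v1 v2"
  shows "continuous_on {0..<T} v1" "continuous_on {0..<T} v2"
  using assms unfolding is_solution_on_def by (auto intro!: DERIV_continuous_on)

lemma is_solution_on_has_derivative_at:
  assumes "is_solution_on T a b v1 v2" "x \<in> {0<..<T}"
  shows "(v1 has_real_derivative (- (v1 x)\<^sup>2 - v2 x)) (at x)"
    and "(v2 has_real_derivative (- v1 x * v2 x + v1 x)) (at x)"
proof -
  have x: "x \<in> {0..<T}" and at: "at x within {0..<T} = at x"
    using assms(2) by (auto intro: at_within_interior)
  show "(v1 has_real_derivative (- (v1 x)\<^sup>2 - v2 x)) (at x)"
    and "(v2 has_real_derivative (- v1 x * v2 x + v1 x)) (at x)"
    using assms(1) x unfolding is_solution_on_def at[symmetric] by auto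
qed

lemma energy_derivative_le:
  fixes v1 v2 u1 u2 M :: real
  assumes M: "\<bar>v1\<bar> + \<bar>v2\<bar> + \<bar>u1\<bar> \<le> M"
  shows "2 * (v1 - u1) * ((- v1\<^sup>2 - v2) - (- u1\<^sup>2 - u2))
           + 2 * (v2 - u2) * ((- v1 * v2 + v1) - (- u1 * u2 + u1))
         \<le> 4 * M * ((v1 - u1)\<^sup>2 + (v2 - u2)\<^sup>2)"
proof -
  define x y where "x = v1 - u1" and "y = v2 - u2"
  have "2 * (v1 - u1) * ((- v1\<^sup>2 - v2) - (- u1\<^sup>2 - u2))
          + 2 * (v2 - u2) * ((- v1 * v2 + v1) - (- u1 * u2 + u1))
        = - (v1 + u1) * (2 * x\<^sup>2) - v2 * (2 * x * y) - u1 * (2 * y\<^sup>2)"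
    unfolding x_def y_def by (simp add: algebra_simps power2_eq_square)
  also have "\<dots> \<le> M * (2 * x\<^sup>2) + M * (x\<^sup>2 + y\<^sup>2) + M * (2 * y\<^sup>2)"
  proof -
    have xy: "\<bar>2 * x * y\<bar> \<le> x\<^sup>2 + y\<^sup>2"
      using sum_squares_bound[of "\<bar>x\<bar>" "\<bar>y\<bar>"] by (simp add: abs_mult)
    have "- v2 * (2 * x * y) \<le> \<bar>v2\<bar> * \<bar>2 * x * y\<bar>"
      by (metis abs_ge_self abs_minus_cancel abs_mult mult_minus_left)
    also have "\<dots> \<le> M * (x\<^sup>2 + y\<^sup>2)"
      using M xy by (intro mult_mono) auto
    finally have "- v2 * (2 * x * y) \<le> M * (x\<^sup>2 + y\<^sup>2)" .
    moreover have "- (v1 + u1) * (2 * x\<^sup>2) \<le> M * (2 * x\<^sup>2)" "- u1 * (2 * y\<^sup>2) \<le> M * (2 * y\<^sup>2)"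
      using M by (intro mult_right_mono; simp)+
    ultimately show ?thesis by linarith
  qed
  also have "\<dots> \<le> 4 * M * ((v1 - u1)\<^sup>2 + (v2 - u2)\<^sup>2)"
    using M unfolding x_def y_def by (simp add: algebra_simps)
  finally show ?thesis .
qed

lemma is_solution_on_unique:
  assumes v: "is_solution_on T a b v1 v2" and u: "is_solution_on T a b u1 u2"
    and t: "t \<in> {0..<T}"
  shows "v1 t = u1 t \<and> v2 t = u2 t"
proof -
  have "{0..t} \<subseteq> {0..<T}" using t by auto
  then have cont: "continuous_on {0..t} v1" "continuous_on {0..t} v2"
    "continuous_on {0..t} u1" "continuous_on {0..t} u2"
    using is_solution_on_continuous[OF v] is_solution_on_continuous[OF u]
    by (auto intro: continuous_on_subset)
  have "continuous_on {0..t} (\<lambda>x. \<bar>v1 x\<bar> + \<bar>v2 x\<bar> + \<bar>u1 x\<bar>)"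
    using cont by (intro continuous_intros)
  then obtain x0 where "\<forall>x\<in>{0..t}. \<bar>v1 x\<bar> + \<bar>v2 x\<bar> + \<bar>u1 x\<bar> \<le> \<bar>v1 x0\<bar> + \<bar>v2 x0\<bar> + \<bar>u1 x0\<bar>"
    using continuous_attains_sup[of "{0..t}"] t by force
  then obtain B where B: "\<And>x. x \<in> {0..t} \<Longrightarrow> \<bar>v1 x\<bar> + \<bar>v2 x\<bar> + \<bar>u1 x\<bar> \<le> B" by blast
  define E where "E x = (v1 x - u1 x)\<^sup>2 + (v2 x - u2 x)\<^sup>2" for x
  define E' where "E' x = 2 * (v1 x - u1 x) * ((- (v1 x)\<^sup>2 - v2 x) - (- (u1 x)\<^sup>2 - u2 x))
      + 2 * (v2 x - u2 x) * ((- v1 x * v2 x + v1 x) - (- u1 x * u2 x + u1 x))" for x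
  have "E t = 0"
  proof (rule nonneg_zero_if_derivative_le_linear
      [where a = 0 and t = t and E = E and E' = E' and K = "4 * B"])
    show "continuous_on {0..t} E" unfolding E_def using cont by (intro continuous_intros)
    show "E 0 = 0" using u v unfolding E_def is_solution_on_def by simp
    fix x assume x: "x \<in> {0<..<t}"
    then have "x \<in> {0<..<T}" using t by auto
    note derivs = is_solution_on_has_derivative_at[OF v this] is_solution_on_has_derivative_at[OF u this]
    have "(E has_real_derivative E' x) (at x)"
      unfolding E_def[abs_def] E'_def by (auto intro!: derivative_eq_intros derivs simp: algebra_simps)
    moreover have "E' x \<le> 4 * B * E x"
      unfolding E'_def E_def using energy_derivative_le[OF B[of x]] x by simp
    ultimately show "(E has_real_derivative E' x) (at x) \<and> E' x \<le> 4 * B * E x" ..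
  qed (use t in \<open>auto simp: E_def\<close>)
  then show ?thesis unfolding E_def by (simp add: add_nonneg_eq_0_iff)
qed

definition riccati_w :: "real \<Rightarrow> real \<Rightarrow> real \<Rightarrow> real" where
  "riccati_w a b t = 1 - b + b * cos t + a * sin t"

definition riccati_w' :: "real \<Rightarrow> real \<Rightarrow> real \<Rightarrow> real" where
  "riccati_w' a b t = a * cos t - b * sin t"

definition explicit_v1 :: "real \<Rightarrow> real \<Rightarrow> real \<Rightarrow> real" where
  "explicit_v1 a b t = riccati_w' a b t / riccati_w a b t"

definition explicit_v2 :: "real \<Rightarrow> real \<Rightarrow> real \<Rightarrow> real" where
  "explicit_v2 a b t = 1 + (b - 1) / riccati_w a b t"

lemma riccati_w_has_derivative: "(riccati_w a b has_real_derivative riccati_w' a b t) (at t)"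
  unfolding riccati_w_def[abs_def] riccati_w'_def by (auto intro!: derivative_eq_intros)

lemma riccati_w'_has_derivative: "(riccati_w' a b has_real_derivative 1 - b - riccati_w a b t) (at t)"
  unfolding riccati_w_def riccati_w'_def[abs_def] by (auto intro!: derivative_eq_intros)

lemma riccati_w_continuous_on: "continuous_on S (riccati_w a b)"
  unfolding riccati_w_def[abs_def] by (intro continuous_intros)

lemma riccati_w_0 [simp]: "riccati_w a b 0 = 1"
  by (simp add: riccati_w_def)

lemma riccati_w_ge_min: "1 - b - sqrt (a\<^sup>2 + b\<^sup>2) \<le> riccati_w a b t"
  using sin_cos_combination_ge[of a b t] unfolding riccati_w_def by linarith

lemma riccati_w_attains_min: "\<exists>s>0. riccati_w a b s = 1 - b - sqrt (a\<^sup>2 + b\<^sup>2)"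
  using sin_cos_combination_attains[of b a] unfolding riccati_w_def by force

lemma explicit_has_derivative:
  assumes "riccati_w a b t \<noteq> 0"
  shows "(explicit_v1 a b has_real_derivative (- (explicit_v1 a b t)\<^sup>2 - explicit_v2 a b t)) (at t)"
    and "(explicit_v2 a b has_real_derivative
            (- explicit_v1 a b t * explicit_v2 a b t + explicit_v1 a b t)) (at t)"
proof -
  note derivs = riccati_w_has_derivative riccati_w'_has_derivative
  show "(explicit_v1 a b has_real_derivative (- (explicit_v1 a b t)\<^sup>2 - explicit_v2 a b t)) (at t)"
    unfolding explicit_v1_def[abs_def] using assms
    by (auto intro!: derivative_eq_intros derivs
        simp: explicit_v1_def explicit_v2_def field_simps power2_eq_square)
  show "(explicit_v2 a b has_real_derivative
          (- explicit_v1 a b t * explicit_v2 a b t + explicit_v1 a b t)) (at t)"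
    unfolding explicit_v2_def[abs_def] using assms
    by (auto intro!: derivative_eq_intros derivs
        simp: explicit_v1_def explicit_v2_def field_simps power2_eq_square)
qed

lemma explicit_is_solution_on:
  assumes "\<And>t. t \<in> {0..<T} \<Longrightarrow> riccati_w a b t \<noteq> 0"
  shows "is_solution_on T a b (explicit_v1 a b) (explicit_v2 a b)"
  unfolding is_solution_on_def
  using explicit_has_derivative[OF assms] 
  by (auto intro: has_field_derivative_at_within
      simp: explicit_v1_def explicit_v2_def riccati_w'_def)

lemma explicit_bounded:
  assumes "0 < d" "\<And>t. d \<le> riccati_w a b t"
  shows "bounded ((\<lambda>t. (explicit_v1 a b t, explicit_v2 a b t)) ` S)"
proof -
  have w': "\<bar>riccati_w' a b t\<bar> \<le> \<bar>a\<bar> + \<bar>b\<bar>" for t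
  proof -
    have "\<bar>a * cos t\<bar> \<le> \<bar>a\<bar>" "\<bar>b * sin t\<bar> \<le> \<bar>b\<bar>"
      by (simp_all add: abs_mult mult_left_le)
    then show ?thesis unfolding riccati_w'_def by linarith
  qed
  have "\<bar>explicit_v1 a b t\<bar> \<le> (\<bar>a\<bar> + \<bar>b\<bar>) / d" for t
  proof -
    have w: "d \<le> riccati_w a b t" "0 < riccati_w a b t" using assms(2)[of t] assms(1) by auto
    have "\<bar>explicit_v1 a b t\<bar> = \<bar>riccati_w' a b t\<bar> / riccati_w a b t"
      unfolding explicit_v1_def using w by (simp add: abs_div)
    also have "\<dots> \<le> (\<bar>a\<bar> + \<bar>b\<bar>) / d"
      using w w'[of t] assms(1) by (intro frac_le) auto
    finally show ?thesis .
  qed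
  then have "bounded (explicit_v1 a b ` S)" by (auto simp: bounded_real)
  moreover have "\<bar>explicit_v2 a b t\<bar> \<le> 1 + \<bar>b - 1\<bar> / d" for t
  proof -
    have w: "d \<le> riccati_w a b t" "0 < riccati_w a b t" using assms(2)[of t] assms(1) by auto
    have "\<bar>explicit_v2 a b t\<bar> \<le> 1 + \<bar>b - 1\<bar> / riccati_w a b t"
      unfolding explicit_v2_def using abs_triangle_ineq[of 1 "(b - 1) / riccati_w a b t"] w
      by (simp add: abs_div)
    also have "\<dots> \<le> 1 + \<bar>b - 1\<bar> / d"
      using w assms(1) by (simp add: divide_left_mono)
    finally show ?thesis .
  qed
  then have "bounded (explicit_v2 a b ` S)" by (auto simp: bounded_real)
  ultimately have "bounded (explicit_v1 a b ` S \<times> explicit_v2 a b ` S)" by (rule bounded_Times)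
  then show ?thesis by (rule bounded_subset) auto
qed

lemma blows_up_if:
  assumes "1 - 2 * b \<le> a\<^sup>2"
  shows "blows_up a b"
proof -
  obtain s where "0 < s" "riccati_w a b s \<le> 0"
    using riccati_w_attains_min[of a b] assms one_minus_le_sqrt_iff[of b a] by force
  then obtain T where T: "0 < T" "riccati_w a b T = 0" "\<And>t. t \<in> {0..<T} \<Longrightarrow> 0 < riccati_w a b t"
    using first_zero_exists[of 0 s "riccati_w a b"] riccati_w_continuous_on by force
  have "\<not> bdd_below ((\<lambda>t. riccati_w' a b t / riccati_w a b t) ` {0<..<T})"
    using T by (intro log_derivative_not_bdd_below riccati_w_continuous_on riccati_w_has_derivative) auto
  then have "\<not> bounded (explicit_v1 a b ` {0..<T})"
    unfolding explicit_v1_def[abs_def]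
    by (meson bounded_imp_bdd_below bounded_subset greaterThanLessThan_subseteq_atLeastLessThan_iff
        image_mono order_refl)
  then have "\<not> bounded ((\<lambda>t. (explicit_v1 a b t, explicit_v2 a b t)) ` {0..<T})"
    using bounded_fst by (fastforce simp: image_image)
  moreover have "is_solution_on T a b (explicit_v1 a b) (explicit_v2 a b)"
    using T by (intro explicit_is_solution_on) force
  ultimately show ?thesis unfolding blows_up_def using T(1) by blast
qed

lemma not_blows_up_if:
  assumes "a\<^sup>2 < 1 - 2 * b"
  shows "\<not> blows_up a b"
proof
  assume "blows_up a b"
  then obtain T v1 v2 where sol: "is_solution_on T a b v1 v2"
    and unbounded: "\<not> bounded ((\<lambda>t. (v1 t, v2 t)) ` {0..<T})"
    unfolding blows_up_def by blast
  define d where "d = 1 - b - sqrt (a\<^sup>2 + b\<^sup>2)"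
  have d: "0 < d" "\<And>t. d \<le> riccati_w a b t"
    using assms one_minus_le_sqrt_iff[of b a] riccati_w_ge_min unfolding d_def by force+
  then have "is_solution_on T a b (explicit_v1 a b) (explicit_v2 a b)"
    by (intro explicit_is_solution_on) (metis less_le_trans less_irrefl)
  then have "(\<lambda>t. (v1 t, v2 t)) ` {0..<T} = (\<lambda>t. (explicit_v1 a b t, explicit_v2 a b t)) ` {0..<T}"
    using is_solution_on_unique[OF sol] by (intro image_cong) auto
  with unbounded explicit_bounded[OF d] show False by simp
qed

theorem mainTheorem15:
  fixes a b :: real
  shows "blows_up a b \<longleftrightarrow> 1 - 2 * b \<le> a ^ 2"
  using blows_up_if not_blows_up_if not_le by blast

end
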